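(* Let $n$ be a positive integer and $N=n^2+1$. Then for every integer $0\le k\le n$, $$(\Delta^k\delta_e,\delta_e)_{\ell^2(H)}=(\Delta_N^k\delta_e,\delta_e)_{\ell^2(H_N)}.$$
   Context: $H$ is the discrete Heisenberg group of $3\times3$ upper unitriangular integer matrices $\begin{pmatrix}1&k&m\\0&1&\ell\\0&0&1\end{pmatrix}$, $k,\ell,m\in\mathbb Z$; for $N\ge2$, $H_N$ is the analogous group with entries in $\mathbb Z/N\mathbb Z$. In both groups $x$ is the matrix with $k=1,\ell=m=0$ and $y$ the matrix with $\ell=1,k=m=0$. $\Delta=\frac14(x+x^{-1}+y+y^{-1})$ is the Laplace operator, an element of the group algebra of $H$ acting on $\ell^2(H)$ via the left regular representation; likewise $\Delta_N=\frac14(x+x^{-1}+y+y^{-1})$ acts on $\ell^2(H_N)$. $\delta_e$ denotes the indicator function of the identity element in the respective group. *)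

theory Defs
  imports "HOL-Analysis.Analysis"
begin

text \<open>Elements of the discrete Heisenberg group H are encoded as triples (k, l, m) of integers,
standing for the upper unitriangular matrix with entries k (position 1,2), l (position 2,3)
and m (position 1,3). Matrix multiplication gives the law below.\<close>

type_synonym heis = "int \<times> int \<times> int"

definition hmul :: "heis \<Rightarrow> heis \<Rightarrow> heis" where
  "hmul g h = (case g of (k, l, m) \<Rightarrow> case h of (k', l', m') \<Rightarrow>
                 (k + k', l + l', m + m' + k * l'))"

definition hinv :: "heis \<Rightarrow> heis" where
  "hinv g = (case g of (k, l, m) \<Rightarrow> (- k, - l, k * l - m))"

definition he :: heis where "he = (0, 0, 0)"
definition hx :: heis where "hx = (1, 0, 0)"
definition hy :: heis where "hy = (0, 1, 0)"

definition lreg :: "heis \<Rightarrow> (heis \<Rightarrow> real) \<Rightarrow> heis \<Rightarrow> real" where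
  "lreg g f = (\<lambda>h. f (hmul (hinv g) h))"

definition Lap :: "(heis \<Rightarrow> real) \<Rightarrow> heis \<Rightarrow> real" where
  "Lap f = (\<lambda>h. (1/4) * (lreg hx f h + lreg (hinv hx) f h + lreg hy f h + lreg (hinv hy) f h))"

definition delta_e :: "heis \<Rightarrow> real" where
  "delta_e = (\<lambda>h. if h = he then 1 else 0)"

definition l2inner :: "(heis \<Rightarrow> real) \<Rightarrow> (heis \<Rightarrow> real) \<Rightarrow> real" where
  "l2inner f g = (\<Sum>\<^sub>\<infinity>h. f h * g h)"

text \<open>The finite Heisenberg group H_N: triples with entries in {0..<N} (representatives of Z/NZ),
with the same law reduced mod N.\<close>

definition hred :: "int \<Rightarrow> heis \<Rightarrow> heis" where
  "hred N g = (case g of (k, l, m) \<Rightarrow> (k mod N, l mod N, m mod N))"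

definition HN :: "int \<Rightarrow> heis set" where
  "HN N = {0..<N} \<times> {0..<N} \<times> {0..<N}"

definition nmul :: "int \<Rightarrow> heis \<Rightarrow> heis \<Rightarrow> heis" where
  "nmul N g h = hred N (hmul g h)"

definition ninv :: "int \<Rightarrow> heis \<Rightarrow> heis" where
  "ninv N g = hred N (hinv g)"

definition lregN :: "int \<Rightarrow> heis \<Rightarrow> (heis \<Rightarrow> real) \<Rightarrow> heis \<Rightarrow> real" where
  "lregN N g f = (\<lambda>h. f (nmul N (ninv N g) h))"

definition LapN :: "int \<Rightarrow> (heis \<Rightarrow> real) \<Rightarrow> heis \<Rightarrow> real" where
  "LapN N f = (\<lambda>h. (1/4) * (lregN N (hred N hx) f h + lregN N (ninv N hx) f h
                            + lregN N (hred N hy) f h + lregN N (ninv N hy) f h))"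

definition delta_eN :: "int \<Rightarrow> heis \<Rightarrow> real" where
  "delta_eN N = (\<lambda>h. if h = hred N he then 1 else 0)"

definition l2innerN :: "int \<Rightarrow> (heis \<Rightarrow> real) \<Rightarrow> (heis \<Rightarrow> real) \<Rightarrow> real" where
  "l2innerN N f g = (\<Sum>h\<in>HN N. f h * g h)"

end

theory Submission
  imports Defs
begin

text \<open>Reduction mod N is a homomorphism from H onto H_N, so pulling functions back along it
intertwines the two Laplacians. Hence the value of the k-th power of the Laplacian of H_N on the
delta function at the identity equals that of the k-th power of the Laplacian of H on the
indicator of the kernel (N Z)^3. That value only depends on the function at the endpoints of
walks of length k from the identity, which satisfy |a|, |b| <= k and |c| <= k^2; for k <= n and
N = n^2 + 1 the identity is the only such point in the kernel.\<close>

lemma hred_hmul: "hred N (hmul (hred N g) (hred N h)) = hred N (hmul g h)"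
  by (cases g; cases h) (simp add: hred_def hmul_def, metis mod_add_eq mod_mult_eq)

lemma hred_hinv: "hred N (hinv (hred N g)) = hred N (hinv g)"
  by (cases g) (simp add: hred_def hinv_def mod_minus_eq mod_diff_right_eq mod_mult_eq
      mod_diff_left_eq[of "_ * _", symmetric])

lemma hinv_hinv [simp]: "hinv (hinv g) = g"
  by (cases g) (simp add: hinv_def)

lemma lregN_hred: "lregN N (hred N g) f (hred N h) = lreg g (\<lambda>h. f (hred N h)) h"
  by (simp add: lregN_def lreg_def nmul_def ninv_def hred_hmul hred_hinv)

lemma LapN_hred: "LapN N f (hred N h) = Lap (\<lambda>h. f (hred N h)) h"
  by (simp add: LapN_def Lap_def ninv_def lregN_hred)

lemma LapN_funpow_hred:
  "(LapN N ^^ j) f (hred N h) = (Lap ^^ j) (\<lambda>h. f (hred N h)) h"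
proof (induction j arbitrary: h)
  case (Suc j)
  then show ?case by (simp add: LapN_hred)
qed simp

lemma Lap_apply:
  "Lap f h = (f (hmul (hinv hx) h) + f (hmul hx h) + f (hmul (hinv hy) h) + f (hmul hy h)) / 4"
  by (simp add: Lap_def lreg_def)

fun walk_ends :: "nat \<Rightarrow> heis \<Rightarrow> heis set" where
  "walk_ends 0 h = {h}"
| "walk_ends (Suc j) h = (\<Union>s\<in>{hinv hx, hx, hinv hy, hy}. walk_ends j (hmul s h))"

lemma Lap_funpow_local:
  assumes "\<And>g. g \<in> walk_ends j h \<Longrightarrow> f g = f' g"
  shows "(Lap ^^ j) f h = (Lap ^^ j) f' h"
  using assms
proof (induction j arbitrary: h)
  case (Suc j)
  then show ?case by (simp add: Lap_apply)
qed simp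

lemma hmul_generators [simp]:
  "hmul hx (a, b, c) = (a + 1, b, c + b)"
  "hmul (hinv hx) (a, b, c) = (a - 1, b, c - b)"
  "hmul hy (a, b, c) = (a, b + 1, c)"
  "hmul (hinv hy) (a, b, c) = (a, b - 1, c)"
  by (simp_all add: hmul_def hinv_def hx_def hy_def)

lemma walk_ends_bound:
  assumes "(a', b', c') \<in> walk_ends j (a, b, c)"
  shows "\<bar>a'\<bar> \<le> \<bar>a\<bar> + j \<and> \<bar>b'\<bar> \<le> \<bar>b\<bar> + j \<and> \<bar>c'\<bar> \<le> \<bar>c\<bar> + j * (\<bar>b\<bar> + j)"
  using assms
proof (induction j arbitrary: a b c)
  case (Suc j)
  have step: "\<bar>a'\<bar> \<le> \<bar>a\<bar> + int (Suc j) \<and> \<bar>b'\<bar> \<le> \<bar>b\<bar> + int (Suc j)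
      \<and> \<bar>c'\<bar> \<le> \<bar>c\<bar> + int (Suc j) * (\<bar>b\<bar> + int (Suc j))"
    if "(a', b', c') \<in> walk_ends j (a1, b1, c1)"
      and "\<bar>a1\<bar> \<le> \<bar>a\<bar> + 1" "\<bar>b1\<bar> \<le> \<bar>b\<bar> + 1" "\<bar>c1\<bar> \<le> \<bar>c\<bar> + \<bar>b\<bar>" for a1 b1 c1
  proof -
    have "int j * (\<bar>b1\<bar> + j) \<le> int j * (\<bar>b\<bar> + 1 + j)"
      using that(3) by (simp add: mult_left_mono)
    moreover have "int (Suc j) * (\<bar>b\<bar> + int (Suc j)) = int j * (\<bar>b\<bar> + 1 + j) + \<bar>b\<bar> + j + 1"
      by (simp add: algebra_simps)
    ultimately show ?thesis
      using Suc.IH[OF that(1)] that(2-4) by (intro conjI) simp_all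
  qed
  from Suc.prems consider
      "(a', b', c') \<in> walk_ends j (a - 1, b, c - b)"
    | "(a', b', c') \<in> walk_ends j (a + 1, b, c + b)"
    | "(a', b', c') \<in> walk_ends j (a, b - 1, c)"
    | "(a', b', c') \<in> walk_ends j (a, b + 1, c)"
    by auto
  then show ?case
  proof cases
    case 1
    then show ?thesis by (rule step) arith+
  next
    case 2
    then show ?thesis by (rule step) arith+
  next
    case 3
    then show ?thesis by (rule step) arith+
  next
    case 4
    then show ?thesis by (rule step) arith+
  qed
qed simp

lemma mod_eq_0_iff_small:
  fixes a N :: int
  assumes "\<bar>a\<bar> < N"
  shows "a mod N = 0 \<longleftrightarrow> a = 0"
  using assms dvd_imp_le_int[of a N] by (auto simp: mod_eq_0_iff_dvd)

lemma hred_eq_he_iff: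
  assumes "\<bar>a\<bar> < N" "\<bar>b\<bar> < N" "\<bar>c\<bar> < N"
  shows "hred N (a, b, c) = hred N he \<longleftrightarrow> (a, b, c) = he"
  using assms by (simp add: hred_def he_def mod_eq_0_iff_small)

lemma l2inner_delta_e: "l2inner f delta_e = f he"
proof -
  have "l2inner f delta_e = (\<Sum>\<^sub>\<infinity>h\<in>{he}. f h * delta_e h)"
    unfolding l2inner_def by (rule infsum_cong_neutral) (auto simp: delta_e_def)
  then show ?thesis by (simp add: delta_e_def)
qed

lemma l2innerN_delta_eN:
  assumes "N > 0"
  shows "l2innerN N f (delta_eN N) = f (hred N he)"
proof -
  have "hred N he \<in> HN N"
    using assms by (simp add: hred_def he_def HN_def)
  then show ?thesis
    by (simp add: l2innerN_def delta_eN_def if_distrib HN_def cong: if_cong)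
qed

theorem lemma4p1:
  fixes n k :: nat
  assumes "n \<ge> 1" and "k \<le> n"
  shows "l2inner ((Lap ^^ k) delta_e) delta_e
       = l2innerN (int (n^2 + 1)) ((LapN (int (n^2 + 1)) ^^ k) (delta_eN (int (n^2 + 1))))
                  (delta_eN (int (n^2 + 1)))"
proof -
  define N where "N = int (n^2 + 1)"
  have delta_e_eq_on_walks: "delta_e g = delta_eN N (hred N g)" if "g \<in> walk_ends k he" for g
  proof -
    obtain a b c where g: "g = (a, b, c)" by (cases g)
    have "int k \<le> int n" "int k * int k \<le> int n * int n" "int n \<le> int n * int n"
      using assms by (simp_all add: mult_mono)
    moreover have "\<bar>a\<bar> \<le> k" "\<bar>b\<bar> \<le> k" "\<bar>c\<bar> \<le> k * k"
      using walk_ends_bound[of a b c k 0 0 0] that by (simp_all add: g he_def)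
    ultimately show ?thesis
      by (simp add: g delta_e_def delta_eN_def hred_eq_he_iff N_def power2_eq_square)
  qed
  have "l2inner ((Lap ^^ k) delta_e) delta_e = (Lap ^^ k) delta_e he"
    by (rule l2inner_delta_e)
  also have "\<dots> = (Lap ^^ k) (\<lambda>g. delta_eN N (hred N g)) he"
    using delta_e_eq_on_walks by (rule Lap_funpow_local)
  also have "\<dots> = (LapN N ^^ k) (delta_eN N) (hred N he)"
    by (rule LapN_funpow_hred[symmetric])
  also have "\<dots> = l2innerN N ((LapN N ^^ k) (delta_eN N)) (delta_eN N)"
    by (rule l2innerN_delta_eN[symmetric]) (simp add: N_def add_pos_nonneg)
  finally show ?thesis unfolding N_def .
qed

end
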